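(* Let $s\ge1$ and let $f\in C^{s+1}(\mathbb{R}^s)$ satisfy $\|D^kf\|_\infty<\infty$ for $k=1,\dots,s+1$. Then for every $\theta\in\{0,1\}^s$, $$\lim_{n\to\infty}\sup_{\alpha\in\mathbb{Z}^s}\left|(-1)^{|\theta|}\,2^{(n+2)|\theta|+ns/2}\,d_{\theta,\alpha}^n(f)-\frac{D^\theta f\left(x_\alpha^n\right)}{\theta!}\right|=0.$$
   Context: Univariate Haar functions: $\psi_0:=\chi_{[0,1]}$ and $\psi_1:=\chi_{[0,\frac12]}-\chi_{[\frac12,1]}$. For $\theta\in\{0,1\}^s$ and $x\in\mathbb{R}^s$, $\psi_\theta(x):=\prod_{j=1}^s\psi_{\theta_j}(x_j)$. For $n\in\mathbb{N}_0$, $\alpha\in\mathbb{Z}^s$, $d_{\theta,\alpha}^n(f):=2^{ns/2}\int_{\mathbb{R}^s}f(t)\,\psi_\theta(2^nt-\alpha)\,dt$. Let $\epsilon:=(1,\dots,1)$ and $x_\alpha^n:=2^{-n}(\alpha+\frac12\epsilon)$. For $k\in\mathbb{N}$, $\|D^kf\|_\infty:=\sup_{x\in\mathbb{R}^s}\max_{|\gamma|=k}\left|\frac{D^\gamma f(x)}{\gamma!}\right|$ (maximum over multi-indices $\gamma\in\mathbb{N}_0^s$). Multi-index notation: $|\theta|=\sum_j\theta_j$, $\theta!=\prod_j\theta_j!$. *)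

theory Defs
  imports "HOL-Analysis.Analysis" "HOL-Library.Multiset"
begin

definition partial :: "'n::finite \<Rightarrow> (real^'n \<Rightarrow> real) \<Rightarrow> real^'n \<Rightarrow> real" where
  "partial i g x = deriv (\<lambda>t. g (x + t *\<^sub>R axis i 1)) 0"

text \<open>Iterated partial derivative along a list of coordinates (innermost = last).\<close>
fun pderiv_list :: "'n::finite list \<Rightarrow> (real^'n \<Rightarrow> real) \<Rightarrow> real^'n \<Rightarrow> real" where
  "pderiv_list [] g = g"
| "pderiv_list (i # is) g = partial i (pderiv_list is g)"

definition Ck :: "nat \<Rightarrow> (real^'n::finite \<Rightarrow> real) \<Rightarrow> bool" where
  "Ck k g \<longleftrightarrow>
     (\<forall>is. length is < k \<longrightarrow> (\<forall>i x. (\<lambda>t. pderiv_list is g (x + t *\<^sub>R axis i 1)) differentiable (at 0)))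
   \<and> (\<forall>is. length is \<le> k \<longrightarrow> continuous_on UNIV (pderiv_list is g))"

definition Dmulti :: "('n::finite \<Rightarrow> nat) \<Rightarrow> (real^'n \<Rightarrow> real) \<Rightarrow> real^'n \<Rightarrow> real" where
  "Dmulti \<gamma> g = pderiv_list (SOME xs. \<forall>i. count (mset xs) i = \<gamma> i) g"

definition mi_abs :: "('n::finite \<Rightarrow> nat) \<Rightarrow> nat" where
  "mi_abs \<gamma> = (\<Sum>j\<in>UNIV. \<gamma> j)"

definition mi_fact :: "('n::finite \<Rightarrow> nat) \<Rightarrow> nat" where
  "mi_fact \<gamma> = (\<Prod>j\<in>UNIV. fact (\<gamma> j))"

definition Dk_bounded :: "nat \<Rightarrow> (real^'n::finite \<Rightarrow> real) \<Rightarrow> bool" where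
  "Dk_bounded k g \<longleftrightarrow> (\<exists>B. \<forall>x \<gamma>. mi_abs \<gamma> = k \<longrightarrow> \<bar>Dmulti \<gamma> g x / real (mi_fact \<gamma>)\<bar> \<le> B)"

definition psi0 :: "real \<Rightarrow> real" where
  "psi0 t = indicator {0..1} t"

definition psi1 :: "real \<Rightarrow> real" where
  "psi1 t = indicator {0..1/2} t - indicator {1/2..1} t"

definition psi :: "('n::finite \<Rightarrow> nat) \<Rightarrow> real^'n \<Rightarrow> real" where
  "psi \<theta> x = (\<Prod>j\<in>UNIV. (if \<theta> j = 0 then psi0 (x $ j) else psi1 (x $ j)))"

definition haar_coeff :: "('n::finite \<Rightarrow> nat) \<Rightarrow> nat \<Rightarrow> ('n \<Rightarrow> int) \<Rightarrow> (real^'n \<Rightarrow> real) \<Rightarrow> real" where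
  "haar_coeff \<theta> n \<alpha> g = 2 powr (real n * real CARD('n) / 2) *
     integral UNIV (\<lambda>t. g t * psi \<theta> (\<chi> j. 2 ^ n * t $ j - real_of_int (\<alpha> j)))"

definition center :: "nat \<Rightarrow> ('n::finite \<Rightarrow> int) \<Rightarrow> real^'n" where
  "center n \<alpha> = (\<chi> j. (real_of_int (\<alpha> j) + 1/2) / 2 ^ n)"

end

(*
  Put h = 2^-(n+1). Splitting psi_1 into the indicators of the two halves of [0,1] in every
  direction j with theta_j = 1 shows that 2^(ns/2) d^n_{theta,alpha}(f) is (-1)^|theta| times the
  integral of the iterated forward difference Delta_h^theta f over a box of side h in those
  directions and 2h in the others.  By the mean value theorem Delta_h^theta f(t) equals
  h^|theta| D^theta f(xi) for some xi with |xi - t| <= |theta| h, and D^theta f is Lipschitz since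
  the derivatives of order |theta| + 1 are bounded.  Hence the normalised coefficient is an average
  of values of D^theta f at points within s 2^-n of x^n_alpha, and the error is O(2^-n) uniformly
  in alpha.  Symmetry of mixed partials, which follows from the symmetry of forward differences by
  the same mean value argument, identifies each derivative of order |theta| + 1 with one of the
  D^gamma f controlled by the hypothesis.
*)
theory Submission
  imports Defs
begin

hide_const (open) Polynomial.content

section \<open>Iterated forward differences\<close>

fun fwd_diff :: "real \<Rightarrow> 'n::finite list \<Rightarrow> (real^'n \<Rightarrow> real) \<Rightarrow> real^'n \<Rightarrow> real" where
  "fwd_diff h [] g = g"
| "fwd_diff h (j # js) g = (\<lambda>t. fwd_diff h js g (t + h *\<^sub>R axis j 1) - fwd_diff h js g t)"

lemma fwd_diff_swap: "fwd_diff h (a # b # js) g = fwd_diff h (b # a # js) g"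
  by (rule ext) (simp add: algebra_simps)

lemma fwd_diff_remove1: "d \<in> set js \<Longrightarrow> fwd_diff h js g = fwd_diff h (d # remove1 d js) g"
proof (induction js)
  case Nil
  then show ?case by simp
next
  case (Cons e js)
  show ?case
  proof (cases "d = e")
    case True
    then show ?thesis by simp
  next
    case False
    then have "fwd_diff h (e # js) g = fwd_diff h (e # d # remove1 d js) g"
      using Cons by simp
    also have "\<dots> = fwd_diff h (d # e # remove1 d js) g"
      by (rule fwd_diff_swap)
    finally show ?thesis using False by simp
  qed
qed

lemma fwd_diff_mset_eq: "mset xs = mset ys \<Longrightarrow> fwd_diff h xs g = fwd_diff h ys g"
proof (induction xs arbitrary: ys)
  case Nil
  then show ?case by simp
next
  case (Cons x xs)
  then have x: "x \<in> set ys" by (metis list.set_intros(1) set_mset_mset)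
  have "mset xs = mset (remove1 x ys)"
    by (simp flip: Cons.prems)
  then have "fwd_diff h xs g = fwd_diff h (remove1 x ys) g"
    by (rule Cons.IH)
  then show ?case using fwd_diff_remove1[OF x] by simp
qed

lemma continuous_on_fwd_diff: "continuous_on UNIV g \<Longrightarrow> continuous_on UNIV (fwd_diff h js g)"
proof (induction js)
  case (Cons j js)
  then have c: "continuous_on UNIV (fwd_diff h js g)" by simp
  have "continuous_on UNIV (\<lambda>t. fwd_diff h js g (t + h *\<^sub>R axis j 1))"
    by (rule continuous_on_compose2[OF c]) (auto intro!: continuous_intros)
  with c show ?case by (simp add: continuous_on_diff)
qed simp

lemma fwd_diff_eq_alternating_sum:
  assumes "distinct js"
  shows "(-1) ^ length js * fwd_diff h js g t
       = (\<Sum>B\<in>Pow (set js). (-1) ^ card B * g (t + h *\<^sub>R (\<Sum>j\<in>B. axis j 1)))"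
  using assms
proof (induction js arbitrary: t)
  case Nil
  then show ?case by simp
next
  case (Cons j js)
  let ?A = "set js"
  let ?E = "\<lambda>t. \<Sum>B\<in>Pow ?A. (-1) ^ card B * g (t + h *\<^sub>R (\<Sum>j\<in>B. axis j 1))"
  have jA: "j \<notin> ?A" using Cons.prems by simp
  have IH: "?E t = (-1) ^ length js * fwd_diff h js g t" for t
    using Cons by simp
  have inj: "inj_on (insert j) (Pow ?A)"
    using jA by (auto simp: inj_on_def)
  have "(\<Sum>B\<in>insert j ` Pow ?A. (-1) ^ card B * g (t + h *\<^sub>R (\<Sum>j\<in>B. axis j 1)))
      = (\<Sum>B\<in>Pow ?A. - ((-1) ^ card B * g ((t + h *\<^sub>R axis j 1) + h *\<^sub>R (\<Sum>j\<in>B. axis j 1))))"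
    unfolding sum.reindex[OF inj] o_def
  proof (rule sum.cong[OF refl])
    fix B assume "B \<in> Pow ?A"
    then have "finite B" "j \<notin> B" using jA finite_subset by auto
    then show "(-1) ^ card (insert j B) * g (t + h *\<^sub>R (\<Sum>j\<in>insert j B. axis j 1))
        = - ((-1) ^ card B * g ((t + h *\<^sub>R axis j 1) + h *\<^sub>R (\<Sum>j\<in>B. axis j 1)))"
      by (simp add: algebra_simps)
  qed
  moreover have "Pow ?A \<inter> insert j ` Pow ?A = {}" using jA by auto
  ultimately have split: "(\<Sum>B\<in>Pow (set (j # js)). (-1) ^ card B * g (t + h *\<^sub>R (\<Sum>j\<in>B. axis j 1)))
      = ?E t - ?E (t + h *\<^sub>R axis j 1)"
    by (simp add: Pow_insert sum.union_disjoint sum_negf)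
  have "(-1) ^ length (j # js) * fwd_diff h (j # js) g t
      = (-1) ^ length js * fwd_diff h js g t - (-1) ^ length js * fwd_diff h js g (t + h *\<^sub>R axis j 1)"
    by (simp add: algebra_simps)
  also have "\<dots> = ?E t - ?E (t + h *\<^sub>R axis j 1)"
    by (simp only: IH)
  finally show ?case
    unfolding split .
qed

section \<open>Partial derivatives along coordinate lines\<close>

lemma pderiv_list_snoc: "pderiv_list js (partial j g) = pderiv_list (js @ [j]) g"
  by (induction js) auto

definition partials_differentiable :: "nat \<Rightarrow> (real^'n::finite \<Rightarrow> real) \<Rightarrow> bool" where
  "partials_differentiable k g \<longleftrightarrow> (\<forall>js. length js < k \<longrightarrow>
     (\<forall>i x. (\<lambda>t. pderiv_list js g (x + t *\<^sub>R axis i 1)) differentiable (at 0)))"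

lemma Ck_imp_partials_differentiable: "Ck k g \<Longrightarrow> l \<le> k \<Longrightarrow> partials_differentiable l g"
  unfolding Ck_def partials_differentiable_def by auto

lemma partials_differentiable_partial:
  "partials_differentiable (Suc k) g \<Longrightarrow> partials_differentiable k (partial j g)"
  unfolding partials_differentiable_def by (simp add: pderiv_list_snoc)

lemma partials_differentiable_SucD:
  "partials_differentiable (Suc k) g \<Longrightarrow> (\<lambda>t. g (x + t *\<^sub>R axis i 1)) differentiable (at 0)"
  unfolding partials_differentiable_def by (metis pderiv_list.simps(1) list.size(3) zero_less_Suc)

lemma has_real_derivative_partial:
  assumes "\<And>x. (\<lambda>t. g (x + t *\<^sub>R axis i 1)) differentiable (at 0)"
  shows "((\<lambda>t. g (x + t *\<^sub>R axis i 1)) has_real_derivative partial i g (x + t0 *\<^sub>R axis i 1)) (at t0)"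
proof -
  let ?x = "x + t0 *\<^sub>R axis i 1"
  have "((\<lambda>t. g (?x + t *\<^sub>R axis i 1)) has_real_derivative partial i g ?x) (at 0)"
    unfolding partial_def using assms[of ?x] DERIV_deriv_iff_real_differentiable by blast
  then have "((\<lambda>t. g (?x + (t - t0) *\<^sub>R axis i 1)) has_real_derivative partial i g ?x) (at (0 + t0))"
    using DERIV_shift[of "\<lambda>t. g (?x + (t - t0) *\<^sub>R axis i 1)" "partial i g ?x" 0 t0] by simp
  moreover have "(\<lambda>t. g (?x + (t - t0) *\<^sub>R axis i 1)) = (\<lambda>t. g (x + t *\<^sub>R axis i 1))"
    by (simp add: algebra_simps)
  ultimately show ?thesis by simp
qed

lemma fwd_diff_has_real_derivative:
  assumes "\<And>x. (\<lambda>t. g (x + t *\<^sub>R axis i 1)) differentiable (at 0)"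
  shows "((\<lambda>t. fwd_diff h js g (x + t *\<^sub>R axis i 1))
           has_real_derivative fwd_diff h js (partial i g) (x + t0 *\<^sub>R axis i 1)) (at t0)"
proof (induction js arbitrary: x)
  case Nil
  then show ?case using has_real_derivative_partial[OF assms] by simp
next
  case (Cons j js)
  have shift: "x + t *\<^sub>R axis i 1 + h *\<^sub>R axis j 1 = (x + h *\<^sub>R axis j 1) + t *\<^sub>R axis i 1" for t
    by (simp add: algebra_simps)
  show ?case
    using DERIV_diff[OF Cons.IH[of "x + h *\<^sub>R axis j 1"] Cons.IH[of x]] by (simp add: shift)
qed

lemma fwd_diff_mean_value:
  assumes "partials_differentiable (length js) g" and "h \<ge> 0"
  shows "\<exists>\<xi>. fwd_diff h js g t = h ^ length js * pderiv_list (rev js) g \<xi>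
            \<and> norm (\<xi> - t) \<le> real (length js) * h"
  using assms(1)
proof (induction js arbitrary: g t)
  case Nil
  then show ?case by (intro exI[of _ t]) simp
next
  case (Cons j js)
  show ?case
  proof (cases "h = 0")
    case True
    then show ?thesis by (intro exI[of _ t]) simp
  next
    case False
    with assms(2) have h: "h > 0" by simp
    let ?G = "\<lambda>\<tau>. fwd_diff h js g (t + \<tau> *\<^sub>R axis j 1)"
    let ?G' = "\<lambda>\<tau>. fwd_diff h js (partial j g) (t + \<tau> *\<^sub>R axis j 1)"
    have "\<And>x. (\<lambda>t. g (x + t *\<^sub>R axis j 1)) differentiable (at 0)"
      using partials_differentiable_SucD Cons.prems by simp
    then have "(?G has_real_derivative ?G' \<tau>) (at \<tau>)" for \<tau>
      by (rule fwd_diff_has_real_derivative)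
    then obtain z where z: "0 < z" "z < h" "?G h - ?G 0 = h * ?G' z"
      using MVT2[OF h, of ?G ?G'] by auto
    have "partials_differentiable (length js) (partial j g)"
      using partials_differentiable_partial Cons.prems by simp
    then obtain \<xi> where
      \<xi>: "?G' z = h ^ length js * pderiv_list (rev js) (partial j g) \<xi>"
         "norm (\<xi> - (t + z *\<^sub>R axis j 1)) \<le> real (length js) * h"
      using Cons.IH by blast
    have eq: "fwd_diff h (j # js) g t = h ^ length (j # js) * pderiv_list (rev (j # js)) g \<xi>"
      using z(3) \<xi>(1) by (simp add: pderiv_list_snoc)
    have "norm (\<xi> - t) \<le> norm (\<xi> - (t + z *\<^sub>R axis j 1)) + norm (z *\<^sub>R axis j (1::real))"
      by (metis diff_diff_eq2 diff_add_cancel norm_triangle_ineq add.commute)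
    also have "\<dots> \<le> real (length js) * h + h"
      using \<xi>(2) z by (simp add: norm_axis_1)
    finally have "norm (\<xi> - t) \<le> real (length (j # js)) * h"
      by (simp add: distrib_right)
    with eq show ?thesis by blast
  qed
qed

lemma fwd_diff_quotient_tendsto:
  assumes "partials_differentiable (length js) g"
    and "continuous_on UNIV (pderiv_list (rev js) g)"
  shows "((\<lambda>h. fwd_diff h js g x / h ^ length js) \<longlongrightarrow> pderiv_list (rev js) g x) (at_right 0)"
proof -
  let ?P = "pderiv_list (rev js) g"
  have "\<forall>h>0. \<exists>\<xi>. fwd_diff h js g x = h ^ length js * ?P \<xi> \<and> norm (\<xi> - x) \<le> real (length js) * h"
    by (simp add: fwd_diff_mean_value[OF assms(1)])
  then obtain \<xi> where
    \<xi>: "\<And>h. 0 < h \<Longrightarrow> fwd_diff h js g x = h ^ length js * ?P (\<xi> h)"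
       "\<And>h. 0 < h \<Longrightarrow> norm (\<xi> h - x) \<le> real (length js) * h"
    by metis
  have pos: "\<forall>\<^sub>F h in at_right 0. 0 < (h::real)"
    by (rule eventually_at_right_less)
  have "((\<lambda>h. real (length js) * h) \<longlongrightarrow> 0) (at_right 0)"
    by (intro tendsto_eq_intros) auto
  moreover have "\<forall>\<^sub>F h in at_right 0. norm (\<xi> h - x) \<le> real (length js) * h"
    using pos by (rule eventually_mono) (rule \<xi>(2))
  ultimately have "((\<lambda>h. \<xi> h - x) \<longlongrightarrow> 0) (at_right 0)"
    by (rule Lim_null_comparison[rotated])
  then have "(\<xi> \<longlongrightarrow> x) (at_right 0)"
    by (simp add: LIM_zero_iff)
  moreover have "isCont ?P x"
    using assms(2) by (simp add: continuous_on_eq_continuous_at)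
  ultimately have "((\<lambda>h. ?P (\<xi> h)) \<longlongrightarrow> ?P x) (at_right 0)"
    by (simp add: isCont_tendsto_compose)
  moreover have "\<forall>\<^sub>F h in at_right 0. ?P (\<xi> h) = fwd_diff h js g x / h ^ length js"
    using pos by (rule eventually_mono) (simp add: \<xi>(1))
  ultimately show ?thesis by (rule Lim_transform_eventually)
qed

text \<open>Both orders of differentiation are limits of the same difference quotient.\<close>

lemma Ck_pderiv_list_mset_eq:
  assumes "Ck k g" "length xs \<le> k" "mset xs = mset ys"
  shows "pderiv_list xs g = pderiv_list ys g"
proof
  fix x
  have len: "length ys = length xs"
    using assms(3) by (metis size_mset)
  have diff: "partials_differentiable (length xs) g"
    using Ck_imp_partials_differentiable assms(1,2) by blast
  have cont: "continuous_on UNIV (pderiv_list zs g)" if "length zs = length xs" for zs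
    using assms(1,2) that unfolding Ck_def by auto
  have "((\<lambda>h. fwd_diff h (rev xs) g x / h ^ length xs) \<longlongrightarrow> pderiv_list xs g x) (at_right 0)"
    using fwd_diff_quotient_tendsto[of "rev xs" g] diff cont[of xs] by simp
  moreover have "fwd_diff h (rev ys) g = fwd_diff h (rev xs) g" for h
    using assms(3) by (intro fwd_diff_mset_eq) simp
  then have "((\<lambda>h. fwd_diff h (rev xs) g x / h ^ length xs) \<longlongrightarrow> pderiv_list ys g x) (at_right 0)"
    using fwd_diff_quotient_tendsto[of "rev ys" g] diff cont[OF len] len by simp
  ultimately show "pderiv_list xs g x = pderiv_list ys g x"
    by (rule tendsto_unique[rotated]) simp
qed

section \<open>Lipschitz bounds from bounded partial derivatives\<close>

lemma abs_diff_along_axis_le: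
  fixes g :: "real^'n::finite \<Rightarrow> real"
  assumes "\<And>x. (\<lambda>t. g (x + t *\<^sub>R axis i 1)) differentiable (at 0)"
    and "\<And>x. \<bar>partial i g x\<bar> \<le> B"
  shows "\<bar>g (x + a *\<^sub>R axis i 1) - g x\<bar> \<le> B * \<bar>a\<bar>"
proof -
  have "norm (g (x + a *\<^sub>R axis i 1) - g (x + 0 *\<^sub>R axis i 1)) \<le> B * norm (a - 0)"
    by (rule field_differentiable_bound[where S = UNIV])
      (use has_real_derivative_partial[OF assms(1)] assms(2) in auto)
  then show ?thesis by simp
qed

lemma abs_diff_le_sum_partial_bounds:
  fixes g :: "real^'n::finite \<Rightarrow> real"
  assumes diff: "\<And>x i. (\<lambda>t. g (x + t *\<^sub>R axis i 1)) differentiable (at 0)"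
    and bound: "\<And>i x. \<bar>partial i g x\<bar> \<le> B i"
  shows "\<bar>g x - g y\<bar> \<le> (\<Sum>i\<in>UNIV. B i * \<bar>x $ i - y $ i\<bar>)"
proof -
  have "\<forall>x y. (\<forall>k. k \<notin> S \<longrightarrow> x $ k = y $ k) \<longrightarrow> \<bar>g x - g y\<bar> \<le> (\<Sum>i\<in>S. B i * \<bar>x $ i - y $ i\<bar>)"
    if "finite S" for S :: "'n set"
    using that
  proof (induction S rule: finite_induct)
    case empty
    then show ?case by (auto simp flip: vec_eq_iff)
  next
    case (insert i S)
    show ?case
    proof (intro allI impI)
      fix x y :: "real^'n"
      assume agree: "\<forall>k. k \<notin> insert i S \<longrightarrow> x $ k = y $ k"
      define z where "z = x + (y $ i - x $ i) *\<^sub>R axis i 1"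
      have z: "z $ k = (if k = i then y $ i else x $ k)" for k
        unfolding z_def by (simp add: axis_def)
      have "\<bar>g z - g x\<bar> \<le> B i * \<bar>y $ i - x $ i\<bar>"
        unfolding z_def by (rule abs_diff_along_axis_le[OF diff bound])
      then have "\<bar>g z - g x\<bar> \<le> B i * \<bar>x $ i - y $ i\<bar>"
        by (metis abs_minus_commute)
      moreover have "\<bar>g z - g y\<bar> \<le> (\<Sum>k\<in>S. B k * \<bar>x $ k - y $ k\<bar>)"
      proof -
        have "\<forall>k. k \<notin> S \<longrightarrow> z $ k = y $ k" using agree z by auto
        then have "\<bar>g z - g y\<bar> \<le> (\<Sum>k\<in>S. B k * \<bar>z $ k - y $ k\<bar>)" using insert.IH by blast
        also have "\<dots> = (\<Sum>k\<in>S. B k * \<bar>x $ k - y $ k\<bar>)"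
          using insert.hyps(2) z by (intro sum.cong) auto
        finally show ?thesis .
      qed
      ultimately show "\<bar>g x - g y\<bar> \<le> (\<Sum>k\<in>insert i S. B k * \<bar>x $ k - y $ k\<bar>)"
        using insert.hyps by simp
    qed
  qed
  from this[of UNIV] show ?thesis by simp
qed

section \<open>Multi-indices as lists of directions\<close>

definition mi_list :: "('n::finite \<Rightarrow> nat) \<Rightarrow> 'n list" where
  "mi_list \<gamma> = (SOME xs. \<forall>i. count (mset xs) i = \<gamma> i)"

lemma count_mset_mi_list: "count (mset (mi_list \<gamma>)) i = \<gamma> i"
proof -
  obtain xs where "mset xs = Abs_multiset \<gamma>"
    using ex_mset by blast
  then have "\<forall>i. count (mset xs) i = \<gamma> i"
    by (simp add: count_Abs_multiset)
  then have "\<forall>i. count (mset (mi_list \<gamma>)) i = \<gamma> i"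
    unfolding mi_list_def by (rule someI)
  then show ?thesis ..
qed

lemma Dmulti_eq_pderiv_list: "Dmulti \<gamma> g = pderiv_list (mi_list \<gamma>) g"
  unfolding Dmulti_def mi_list_def ..

lemma mi_abs_count_mset: "mi_abs (count (mset xs)) = length xs"
proof -
  have "length xs = (\<Sum>i\<in>set xs. count (mset xs) i)"
    by (simp flip: size_mset add: size_multiset_overloaded_eq)
  also have "\<dots> = (\<Sum>i\<in>UNIV. count (mset xs) i)"
    by (rule sum.mono_neutral_left) auto
  finally show ?thesis
    unfolding mi_abs_def ..
qed

lemma length_mi_list: "length (mi_list \<gamma>) = mi_abs \<gamma>"
proof -
  have "count (mset (mi_list \<gamma>)) = \<gamma>"
    by (rule ext) (rule count_mset_mi_list)
  then show ?thesis
    using mi_abs_count_mset[of "mi_list \<gamma>"] by simp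
qed

lemma set_mi_list: "set (mi_list \<gamma>) = {j. \<gamma> j \<noteq> 0}"
proof -
  have "j \<in> set (mi_list \<gamma>) \<longleftrightarrow> \<gamma> j \<noteq> 0" for j
    using count_mset_0_iff[of "mi_list \<gamma>" j] by (simp add: count_mset_mi_list)
  then show ?thesis by auto
qed

lemma distinct_mi_list:
  assumes "\<And>j. \<gamma> j \<le> 1"
  shows "distinct (mi_list \<gamma>)"
  unfolding distinct_count_atmost_1 set_mi_list count_mset_mi_list
proof
  fix a
  from assms[of a] show "\<gamma> a = (if a \<in> {j. \<gamma> j \<noteq> 0} then 1 else 0)"
    by (cases "\<gamma> a = 0") (auto simp: le_Suc_eq)
qed

lemma mi_abs_le_card:
  fixes \<gamma> :: "'n::finite \<Rightarrow> nat"
  assumes "\<And>j. \<gamma> j \<le> 1"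
  shows "mi_abs \<gamma> \<le> CARD('n)"
proof -
  from assms have "mi_abs \<gamma> = card (set (mi_list \<gamma>))"
    by (simp add: distinct_card distinct_mi_list length_mi_list)
  also have "\<dots> \<le> CARD('n)"
    by (rule card_mono) auto
  finally show ?thesis .
qed

lemma mi_fact_pos: "0 < mi_fact \<gamma>"
  unfolding mi_fact_def by (simp add: prod_pos)

lemma mi_fact_eq_1:
  assumes "\<And>j. \<gamma> j \<le> 1"
  shows "mi_fact \<gamma> = 1"
proof -
  have "fact (\<gamma> j) = (1::nat)" for j
    using assms[of j] by (cases "\<gamma> j") auto
  then show ?thesis
    unfolding mi_fact_def by simp
qed

lemma Dk_bounded_imp_pderiv_list_bounded:
  assumes "Ck k g" "length xs \<le> k" "Dk_bounded (length xs) g"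
  shows "\<exists>B. \<forall>x. \<bar>pderiv_list xs g x\<bar> \<le> B"
proof -
  let ?\<gamma> = "count (mset xs)"
  obtain B where B: "\<And>x. \<bar>Dmulti ?\<gamma> g x / real (mi_fact ?\<gamma>)\<bar> \<le> B"
    using assms(3) mi_abs_count_mset unfolding Dk_bounded_def by metis
  have "mset xs = mset (mi_list ?\<gamma>)"
    by (rule multiset_eqI) (simp add: count_mset_mi_list)
  then have "pderiv_list xs g = Dmulti ?\<gamma> g"
    unfolding Dmulti_eq_pderiv_list using Ck_pderiv_list_mset_eq assms(1,2) by blast
  then have "\<bar>pderiv_list xs g x\<bar> \<le> B * real (mi_fact ?\<gamma>)" for x
    using B[of x] mi_fact_pos[of ?\<gamma>] by (simp add: abs_divide pos_divide_le_eq)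
  then show ?thesis by blast
qed

lemma Dk_bounded_imp_pderiv_list_lipschitz:
  assumes "Ck k g" "length xs < k" "Dk_bounded (Suc (length xs)) g"
  shows "\<exists>L\<ge>0. \<forall>x y. \<bar>pderiv_list xs g x - pderiv_list xs g y\<bar> \<le> L * norm (x - y)"
proof -
  have "\<forall>i. \<exists>B. \<forall>x. \<bar>partial i (pderiv_list xs g) x\<bar> \<le> B"
    using Dk_bounded_imp_pderiv_list_bounded[OF assms(1), of "i # xs" for i] assms(2,3) by simp
  then obtain B where B: "\<And>i x. \<bar>partial i (pderiv_list xs g) x\<bar> \<le> B i"
    by metis
  have B_nonneg: "0 \<le> B i" for i
    using B[of i 0] by linarith
  have diff: "(\<lambda>t. pderiv_list xs g (x + t *\<^sub>R axis i 1)) differentiable (at 0)" for x i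
    using assms(1,2) unfolding Ck_def by blast
  have "\<bar>pderiv_list xs g x - pderiv_list xs g y\<bar> \<le> (\<Sum>i\<in>UNIV. B i) * norm (x - y)" for x y
  proof -
    have "\<bar>pderiv_list xs g x - pderiv_list xs g y\<bar> \<le> (\<Sum>i\<in>UNIV. B i * \<bar>x $ i - y $ i\<bar>)"
      using diff B by (rule abs_diff_le_sum_partial_bounds)
    also have "\<dots> \<le> (\<Sum>i\<in>UNIV. B i * norm (x - y))"
      using B_nonneg component_le_norm_cart[of "x - y"] by (intro sum_mono mult_left_mono) auto
    finally show ?thesis
      by (simp add: sum_distrib_right)
  qed
  moreover have "0 \<le> (\<Sum>i\<in>UNIV. B i)"
    using B_nonneg by (simp add: sum_nonneg)
  ultimately show ?thesis by blast
qed

section \<open>Haar coefficients as integrals of forward differences\<close>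

definition haar_step :: "nat \<Rightarrow> real" where
  "haar_step n = 1 / 2 ^ Suc n"

definition dyadic_corner :: "nat \<Rightarrow> ('n::finite \<Rightarrow> int) \<Rightarrow> real^'n" where
  "dyadic_corner n \<alpha> = (\<chi> j. real_of_int (\<alpha> j) / 2 ^ n)"

definition haar_width :: "('n::finite \<Rightarrow> nat) \<Rightarrow> nat \<Rightarrow> real^'n" where
  "haar_width \<theta> n = (\<chi> j. if \<theta> j = 0 then 2 * haar_step n else haar_step n)"

text \<open>The dyadic cell of \<open>\<psi>\<^sub>\<theta>(2\<^sup>n \<cdot> - \<alpha>)\<close> is cut in half in every direction \<open>j\<close> with
  \<open>\<theta> j = 1\<close>; \<open>haar_box \<theta> n \<alpha> B\<close> is the piece taking the upper half exactly in the
  directions \<open>j \<in> B\<close>, where \<open>\<psi>\<^sub>\<theta>\<close> has sign \<open>(-1)\<^bsup>card B\<^esup>\<close>.\<close>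

definition haar_box :: "('n::finite \<Rightarrow> nat) \<Rightarrow> nat \<Rightarrow> ('n \<Rightarrow> int) \<Rightarrow> 'n set \<Rightarrow> (real^'n) set" where
  "haar_box \<theta> n \<alpha> B =
     cbox (dyadic_corner n \<alpha> + haar_step n *\<^sub>R (\<Sum>j\<in>B. axis j 1))
          (dyadic_corner n \<alpha> + haar_width \<theta> n + haar_step n *\<^sub>R (\<Sum>j\<in>B. axis j 1))"

lemma haar_step_pos: "0 < haar_step n"
  by (simp add: haar_step_def)

lemma sum_axis_nth: "(\<Sum>j\<in>B. axis j (1::real)) $ k = (if k \<in> B then 1 else 0)"
  for B :: "'n::finite set"
  by (simp add: sum_component axis_def sum.delta)

lemma indicator_cbox_cart:
  "indicator (cbox a b) t = (\<Prod>k\<in>UNIV. indicator {a $ k..b $ k} (t $ k) :: real)"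
  for a b t :: "real^'n::finite"
proof (cases "t \<in> cbox a b")
  case True
  then show ?thesis by (simp add: mem_box_cart)
next
  case False
  then obtain k where k: "t $ k \<notin> {a $ k..b $ k}"
    by (auto simp: mem_box_cart)
  then have "(\<Prod>k\<in>UNIV. indicator {a $ k..b $ k} (t $ k) :: real) = 0"
    by (intro prod_zero bexI[of _ k]) auto
  with False show ?thesis
    by simp
qed

lemma psi0_dilate:
  "psi0 (2 ^ n * x - a) = indicator {a / 2 ^ n..a / 2 ^ n + 2 * haar_step n} x"
  by (simp add: psi0_def indicator_def haar_step_def field_simps)

lemma psi1_dilate:
  "psi1 (2 ^ n * x - a) = indicator {a / 2 ^ n..a / 2 ^ n + haar_step n} x
     - indicator {a / 2 ^ n + haar_step n..a / 2 ^ n + 2 * haar_step n} x"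
  by (simp add: psi1_def indicator_def haar_step_def field_simps)

lemma prod_minus_eq_alternating_sum:
  fixes S :: "bool \<Rightarrow> 'a \<Rightarrow> 'b::comm_ring_1"
  assumes "finite A" and "J \<subseteq> A"
  shows "(\<Prod>k\<in>A. S False k - (if k \<in> J then S True k else 0))
       = (\<Sum>X\<in>Pow J. (-1) ^ card X * (\<Prod>k\<in>A. S (k \<in> X) k))"
proof -
  define R where "R k = (if k \<in> J then - S True k else 0)" for k
  have "(\<Prod>k\<in>A. S False k - (if k \<in> J then S True k else 0)) = (\<Prod>k\<in>A. R k + S False k)"
    by (intro prod.cong) (auto simp: R_def)
  also have "\<dots> = (\<Sum>X\<in>Pow A. (\<Prod>k\<in>X. R k) * (\<Prod>k\<in>A - X. S False k))"
    by (rule prod_add) (rule assms(1))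
  also have "\<dots> = (\<Sum>X\<in>Pow J. (\<Prod>k\<in>X. R k) * (\<Prod>k\<in>A - X. S False k))"
  proof (rule sum.mono_neutral_right)
    show "\<forall>X\<in>Pow A - Pow J. (\<Prod>k\<in>X. R k) * (\<Prod>k\<in>A - X. S False k) = 0"
    proof
      fix X assume X: "X \<in> Pow A - Pow J"
      then obtain k where "k \<in> X" "k \<notin> J"
        by auto
      moreover have "finite X"
        using X assms(1) finite_subset by blast
      ultimately have "(\<Prod>k\<in>X. R k) = 0"
        by (intro prod_zero bexI[of _ k]) (auto simp: R_def)
      then show "(\<Prod>k\<in>X. R k) * (\<Prod>k\<in>A - X. S False k) = 0"
        by simp
    qed
  qed (use assms in auto)
  also have "\<dots> = (\<Sum>X\<in>Pow J. (-1) ^ card X * (\<Prod>k\<in>A. S (k \<in> X) k))"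
  proof (rule sum.cong[OF refl])
    fix X assume "X \<in> Pow J"
    then have X: "X \<subseteq> A"
      using assms(2) by blast
    have "(\<Prod>k\<in>X. R k) = (\<Prod>k\<in>X. - S True k)"
      using \<open>X \<in> Pow J\<close> by (intro prod.cong) (auto simp: R_def)
    also have "\<dots> = (-1) ^ card X * (\<Prod>k\<in>X. S True k)"
      by (simp add: prod_uminus)
    finally have R: "(\<Prod>k\<in>X. R k) = (-1) ^ card X * (\<Prod>k\<in>X. S True k)" .
    have "(\<Prod>k\<in>A. S (k \<in> X) k) = (\<Prod>k\<in>A - X. S (k \<in> X) k) * (\<Prod>k\<in>X. S (k \<in> X) k)"
      using X assms(1) by (rule prod.subset_diff)
    also have "\<dots> = (\<Prod>k\<in>A - X. S False k) * (\<Prod>k\<in>X. S True k)"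
      by (intro arg_cong2[where f = "(*)"] prod.cong) auto
    finally show "(\<Prod>k\<in>X. R k) * (\<Prod>k\<in>A - X. S False k) = (-1) ^ card X * (\<Prod>k\<in>A. S (k \<in> X) k)"
      unfolding R by simp
  qed
  finally show ?thesis .
qed

lemma psi_dilate_eq_alternating_sum:
  fixes \<theta> :: "'n::finite \<Rightarrow> nat"
  assumes "\<And>j. \<theta> j \<le> 1"
  shows "psi \<theta> (\<chi> j. 2 ^ n * t $ j - real_of_int (\<alpha> j))
       = (\<Sum>B\<in>Pow {j. \<theta> j \<noteq> 0}. (-1) ^ card B * indicator (haar_box \<theta> n \<alpha> B) t)"
proof -
  define e where "e = haar_step n"
  define l where "l k = real_of_int (\<alpha> k) / 2 ^ n" for k
  define w where "w k = (if \<theta> k = 0 then 2 * e else e)" for k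
  define S :: "bool \<Rightarrow> 'n \<Rightarrow> real"
    where "S b k = indicator {l k + (if b then e else 0)..l k + w k + (if b then e else 0)} (t $ k)"
    for b k
  have box: "indicator (haar_box \<theta> n \<alpha> B) t = (\<Prod>k\<in>UNIV. S (k \<in> B) k)" for B
    unfolding haar_box_def indicator_cbox_cart
    by (intro prod.cong refl)
      (simp add: S_def sum_axis_nth dyadic_corner_def haar_width_def l_def w_def e_def del: sum_component)
  have factor: "(if \<theta> k = 0 then psi0 (2 ^ n * t $ k - real_of_int (\<alpha> k))
                 else psi1 (2 ^ n * t $ k - real_of_int (\<alpha> k)))
              = S False k - (if k \<in> {j. \<theta> j \<noteq> 0} then S True k else 0)" for k
    using assms[of k]
    by (auto simp: psi0_dilate psi1_dilate S_def w_def l_def e_def add.commute)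
  show ?thesis
    unfolding psi_def vec_lambda_beta factor box
    by (rule prod_minus_eq_alternating_sum) auto
qed

lemma integral_cbox_translate:
  fixes f :: "real^'n::finite \<Rightarrow> real"
  assumes "continuous_on UNIV f"
  shows "integral (cbox (a + v) (b + v)) f = integral (cbox a b) (\<lambda>t. f (t + v))"
proof -
  have "f integrable_on cbox (a + v) (b + v)"
    using assms by (auto intro: integrable_continuous continuous_on_subset)
  then have "(f has_integral integral (cbox (a + v) (b + v)) f) (cbox (a + v) (b + v))"
    by (rule integrable_integral)
  from has_integral_affinity'[OF this, of 1 v]
  show ?thesis by (simp add: integral_unique)
qed

text \<open>Translating every box back to \<open>haar_box \<theta> n \<alpha> {}\<close> turns the alternating sum of
  indicators into the alternating sum defining the forward difference.\<close>

lemma haar_integral_eq_fwd_diff: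
  fixes f :: "real^'n::finite \<Rightarrow> real"
  assumes "\<And>j. \<theta> j \<le> 1" and cont: "continuous_on UNIV f"
    and js: "distinct js" "set js = {j. \<theta> j \<noteq> 0}"
  shows "integral UNIV (\<lambda>t. f t * psi \<theta> (\<chi> j. 2 ^ n * t $ j - real_of_int (\<alpha> j)))
     = (-1) ^ length js * integral (haar_box \<theta> n \<alpha> {}) (fwd_diff (haar_step n) js f)"
proof -
  define J where "J = {j. \<theta> j \<noteq> 0}"
  define v where "v X = haar_step n *\<^sub>R (\<Sum>j\<in>X. axis j (1::real))" for X :: "'n set"
  have box: "haar_box \<theta> n \<alpha> X = cbox (dyadic_corner n \<alpha> + v X) (dyadic_corner n \<alpha> + haar_width \<theta> n + v X)" for X
    unfolding haar_box_def v_def ..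
  have int_box: "f integrable_on haar_box \<theta> n \<alpha> X" for X
    unfolding haar_box_def using cont by (auto intro: integrable_continuous continuous_on_subset)
  have int_shift: "(\<lambda>t. f (t + v X)) integrable_on haar_box \<theta> n \<alpha> {}" for X
    unfolding haar_box_def
    by (intro integrable_continuous continuous_on_subset[OF continuous_on_compose2[OF cont]])
      (auto intro!: continuous_intros)
  have "integral UNIV (\<lambda>t. f t * psi \<theta> (\<chi> j. 2 ^ n * t $ j - real_of_int (\<alpha> j)))
      = integral UNIV (\<lambda>t. \<Sum>X\<in>Pow J. (-1) ^ card X * (if t \<in> haar_box \<theta> n \<alpha> X then f t else 0))"
    unfolding psi_dilate_eq_alternating_sum[OF assms(1)] J_def sum_distrib_left
    by (intro arg_cong[where f = "integral UNIV"] ext sum.cong) auto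
  also have "\<dots> = (\<Sum>X\<in>Pow J. (-1) ^ card X * integral (haar_box \<theta> n \<alpha> X) f)"
    using int_box by (simp add: integral_sum integral_restrict_UNIV integrable_restrict_UNIV)
  also have "\<dots> = (\<Sum>X\<in>Pow J. (-1) ^ card X * integral (haar_box \<theta> n \<alpha> {}) (\<lambda>t. f (t + v X)))"
    unfolding box by (simp add: integral_cbox_translate[OF cont] v_def)
  also have "\<dots> = integral (haar_box \<theta> n \<alpha> {}) (\<lambda>t. \<Sum>X\<in>Pow J. (-1) ^ card X * f (t + v X))"
    using int_shift by (simp add: integral_sum)
  also have "\<dots> = integral (haar_box \<theta> n \<alpha> {}) (\<lambda>t. (-1) ^ length js * fwd_diff (haar_step n) js f t)"
    unfolding J_def v_def js(2)[symmetric] fwd_diff_eq_alternating_sum[OF js(1), symmetric] ..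
  also have "\<dots> = (-1) ^ length js * integral (haar_box \<theta> n \<alpha> {}) (fwd_diff (haar_step n) js f)"
    by simp
  finally show ?thesis .
qed

lemma content_haar_box:
  fixes \<theta> :: "'n::finite \<Rightarrow> nat"
  defines "J \<equiv> {j. \<theta> j \<noteq> 0}"
  shows "content (haar_box \<theta> n \<alpha> {})
       = haar_step n ^ card J * (2 * haar_step n) ^ (CARD('n) - card J)"
proof -
  define w where "w j = (if \<theta> j = 0 then 2 * haar_step n else haar_step n)" for j
  have "haar_box \<theta> n \<alpha> {} \<noteq> {}"
    by (auto simp: haar_box_def interval_eq_empty_cart haar_width_def haar_step_def)
  then have "content (haar_box \<theta> n \<alpha> {}) = (\<Prod>j\<in>UNIV. w j)"
    unfolding haar_box_def by (simp add: content_cbox_cart haar_width_def w_def)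
  also have "\<dots> = (\<Prod>j\<in>UNIV - J. w j) * (\<Prod>j\<in>J. w j)"
    by (rule prod.subset_diff) auto
  also have "\<dots> = (\<Prod>j\<in>UNIV - J. 2 * haar_step n) * (\<Prod>j\<in>J. haar_step n)"
    by (intro arg_cong2[where f = "(*)"] prod.cong) (auto simp: J_def w_def)
  also have "\<dots> = haar_step n ^ card J * (2 * haar_step n) ^ (CARD('n) - card J)"
    by (simp add: card_Diff_subset)
  finally show ?thesis .
qed

section \<open>The error estimate\<close>

lemma abs_average_minus_le:
  fixes g :: "'a::euclidean_space \<Rightarrow> real"
  assumes int: "g integrable_on cbox a b" and K: "0 < content (cbox a b)"
    and bound: "\<And>t. t \<in> cbox a b \<Longrightarrow> \<bar>g t - y\<bar> \<le> \<epsilon>"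
  shows "\<bar>integral (cbox a b) g / content (cbox a b) - y\<bar> \<le> \<epsilon>"
proof -
  let ?K = "content (cbox a b)" and ?I = "integral (cbox a b) g"
  have "cbox a b \<noteq> {}"
    using K by auto
  then obtain t where "t \<in> cbox a b"
    by blast
  then have "0 \<le> \<epsilon>"
    using bound[of t] by linarith
  moreover have "((\<lambda>t. g t - y) has_integral ?I - ?K * y) (cbox a b)"
    using has_integral_diff[OF integrable_integral[OF int] has_integral_const] by simp
  ultimately have "norm (?I - ?K * y) \<le> \<epsilon> * ?K"
    by (rule has_integral_bound) (simp add: bound)
  moreover have "?I / ?K - y = (?I - ?K * y) / ?K"
    using K by (simp add: diff_divide_distrib)
  ultimately show ?thesis
    using K by (simp add: abs_divide pos_divide_le_eq)
qed

lemma norm_minus_center_le: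
  fixes t :: "real^'n::finite"
  assumes "t \<in> haar_box \<theta> n \<alpha> {}"
  shows "norm (t - center n \<alpha>) \<le> real CARD('n) * haar_step n"
proof -
  have coord: "\<bar>(t - center n \<alpha>) $ k\<bar> \<le> haar_step n" for k
  proof -
    have "dyadic_corner n \<alpha> $ k \<le> t $ k" "t $ k \<le> dyadic_corner n \<alpha> $ k + haar_width \<theta> n $ k"
      using assms by (simp_all add: haar_box_def mem_box_cart)
    moreover have "haar_width \<theta> n $ k \<le> 2 * haar_step n"
      using haar_step_pos[of n] by (simp add: haar_width_def)
    moreover have "center n \<alpha> $ k = dyadic_corner n \<alpha> $ k + haar_step n"
      by (simp add: center_def dyadic_corner_def haar_step_def field_simps)
    ultimately show ?thesis
      by (simp add: abs_le_iff)
  qed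
  have "(\<Sum>k\<in>UNIV. \<bar>(t - center n \<alpha>) $ k\<bar>) \<le> (\<Sum>k\<in>(UNIV::'n set). haar_step n)"
    by (rule sum_mono) (rule coord)
  then show ?thesis
    using norm_le_l1_cart[of "t - center n \<alpha>"] by simp
qed

lemma power_two_mul_content_haar_box:
  fixes \<theta> :: "'n::finite \<Rightarrow> nat" and n :: nat and \<alpha> :: "'n \<Rightarrow> int"
  assumes \<theta>: "\<And>j. \<theta> j \<le> 1"
  defines "m \<equiv> mi_abs \<theta>" and "h \<equiv> haar_step n"
  shows "2 ^ ((n + 2) * m + n * CARD('n)) * (h ^ m * content (haar_box \<theta> n \<alpha> {})) = 1"
proof -
  let ?s = "CARD('n)"
  have "card {j. \<theta> j \<noteq> 0} = m"
    using distinct_card[OF distinct_mi_list[OF \<theta>]] by (simp add: set_mi_list length_mi_list m_def)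
  moreover have "m \<le> ?s"
    unfolding m_def by (rule mi_abs_le_card[OF \<theta>])
  then obtain d where s: "?s = m + d"
    by (auto simp: le_iff_add)
  ultimately have K: "content (haar_box \<theta> n \<alpha> {}) = h ^ m * (2 * h) ^ d"
    using content_haar_box[of \<theta> n \<alpha>] by (simp add: h_def)
  have exps: "(n + 2) * m + n * ?s + d = Suc n * (m + m + d)"
    unfolding s by (simp add: algebra_simps)
  have "2 ^ ((n + 2) * m + n * ?s) * (h ^ m * content (haar_box \<theta> n \<alpha> {}))
      = 2 ^ ((n + 2) * m + n * ?s) * 2 ^ d * h ^ (m + m + d)"
    unfolding K power_mult_distrib power_add by (simp only: ac_simps)
  also have "\<dots> = (2 ^ Suc n) ^ (m + m + d) * h ^ (m + m + d)"
    by (simp only: power_add[symmetric] exps power_mult)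
  also have "\<dots> = (2 ^ Suc n * h) ^ (m + m + d)"
    by (rule power_mult_distrib[symmetric])
  also have "\<dots> = 1"
    by (simp add: h_def haar_step_def)
  finally show ?thesis .
qed

lemma haar_coeff_scaled_eq_average:
  fixes f :: "real^'n::finite \<Rightarrow> real" and \<theta> :: "'n \<Rightarrow> nat" and n :: nat and \<alpha> :: "'n \<Rightarrow> int"
  assumes \<theta>: "\<And>j. \<theta> j \<le> 1" and cont: "continuous_on UNIV f"
  defines "m \<equiv> mi_abs \<theta>" and "h \<equiv> haar_step n" and "Q \<equiv> haar_box \<theta> n \<alpha> {}"
  shows "(-1) ^ m * 2 powr (real ((n + 2) * m) + real n * real CARD('n) / 2) * haar_coeff \<theta> n \<alpha> f
       = integral Q (\<lambda>t. fwd_diff h (rev (mi_list \<theta>)) f t / h ^ m) / content Q"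
proof -
  let ?s = "CARD('n)"
  let ?I = "integral Q (fwd_diff h (rev (mi_list \<theta>)) f)"
  have len: "length (rev (mi_list \<theta>)) = m"
    by (simp add: length_mi_list m_def)
  have js: "distinct (rev (mi_list \<theta>))" "set (rev (mi_list \<theta>)) = {j. \<theta> j \<noteq> 0}"
    by (simp_all add: distinct_mi_list[OF \<theta>] set_mi_list)
  have coeff: "haar_coeff \<theta> n \<alpha> f = 2 powr (real n * ?s / 2) * ((-1) ^ m * ?I)"
    unfolding haar_coeff_def haar_integral_eq_fwd_diff[OF \<theta> cont js] len
    unfolding h_def Q_def ..
  have exponent: "real ((n + 2) * m) + real n * ?s / 2 + real n * ?s / 2 = real ((n + 2) * m + n * ?s)"
    by simp
  have pow: "2 powr (real ((n + 2) * m) + real n * ?s / 2) * 2 powr (real n * ?s / 2)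
      = 2 ^ ((n + 2) * m + n * ?s)"
    unfolding powr_add[symmetric] exponent by (rule powr_realpow) simp
  have scale: "2 ^ ((n + 2) * m + n * ?s) * (h ^ m * content Q) = 1"
    unfolding m_def h_def Q_def by (rule power_two_mul_content_haar_box[OF \<theta>])
  then have "h ^ m * content Q \<noteq> 0"
    by (metis mult_zero_right zero_neq_one)
  with scale have "2 ^ ((n + 2) * m + n * ?s) = 1 / (h ^ m * content Q)"
    by (rule eq_divide_imp[rotated])
  moreover have "(-1) ^ m * 2 powr (real ((n + 2) * m) + real n * ?s / 2) * haar_coeff \<theta> n \<alpha> f
      = ((-1) ^ m * (-1) ^ m) * 2 ^ ((n + 2) * m + n * ?s) * ?I"
    unfolding coeff pow[symmetric] by (simp only: ac_simps)
  moreover have "(-1::real) ^ m * (-1) ^ m = 1"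
    by (simp flip: power_mult_distrib)
  ultimately show ?thesis
    by simp
qed

lemma fwd_diff_quotient_near_center:
  fixes f :: "real^'n::finite \<Rightarrow> real" and \<theta> :: "'n \<Rightarrow> nat"
  assumes \<theta>: "\<And>j. \<theta> j \<le> 1" and diff: "partials_differentiable (mi_abs \<theta>) f"
    and lip: "\<And>x y. \<bar>Dmulti \<theta> f x - Dmulti \<theta> f y\<bar> \<le> L * norm (x - y)" and "0 \<le> L"
    and t: "t \<in> haar_box \<theta> n \<alpha> {}"
  shows "\<bar>fwd_diff (haar_step n) (rev (mi_list \<theta>)) f t / haar_step n ^ mi_abs \<theta>
           - Dmulti \<theta> f (center n \<alpha>)\<bar> \<le> L * real CARD('n) / 2 ^ n"
proof -
  let ?m = "mi_abs \<theta>" and ?h = "haar_step n" and ?js = "rev (mi_list \<theta>)"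
  have h: "0 < ?h"
    by (rule haar_step_pos)
  have "partials_differentiable (length ?js) f"
    using diff by (simp add: length_mi_list)
  from fwd_diff_mean_value[OF this, of ?h t] h obtain \<xi>
    where \<xi>: "fwd_diff ?h ?js f t = ?h ^ ?m * Dmulti \<theta> f \<xi>" "norm (\<xi> - t) \<le> real ?m * ?h"
    by (auto simp: length_mi_list Dmulti_eq_pderiv_list)
  have "real ?m * ?h \<le> real CARD('n) * ?h"
    using mi_abs_le_card[OF \<theta>] h by (intro mult_right_mono) auto
  with \<xi>(2) have "norm (\<xi> - t) + norm (t - center n \<alpha>) \<le> real CARD('n) * ?h + real CARD('n) * ?h"
    using norm_minus_center_le[OF t] by linarith
  moreover have "norm (\<xi> - center n \<alpha>) \<le> norm (\<xi> - t) + norm (t - center n \<alpha>)"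
    using norm_triangle_ineq[of "\<xi> - t" "t - center n \<alpha>"] by simp
  moreover have "real CARD('n) * ?h + real CARD('n) * ?h = real CARD('n) / 2 ^ n"
    by (simp add: haar_step_def)
  ultimately have "norm (\<xi> - center n \<alpha>) \<le> real CARD('n) / 2 ^ n"
    by linarith
  then have "\<bar>Dmulti \<theta> f \<xi> - Dmulti \<theta> f (center n \<alpha>)\<bar> \<le> L * (real CARD('n) / 2 ^ n)"
    using lip[of \<xi> "center n \<alpha>"] \<open>0 \<le> L\<close> by (meson mult_left_mono order_trans)
  then show ?thesis
    using \<xi>(1) h by simp
qed

lemma haar_coeff_error_le:
  fixes f :: "real^'n::finite \<Rightarrow> real" and \<theta> :: "'n \<Rightarrow> nat"
  assumes \<theta>: "\<And>j. \<theta> j \<le> 1" and cont: "continuous_on UNIV f"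
    and diff: "partials_differentiable (mi_abs \<theta>) f"
    and lip: "\<And>x y. \<bar>Dmulti \<theta> f x - Dmulti \<theta> f y\<bar> \<le> L * norm (x - y)" and "0 \<le> L"
  shows "\<bar>(-1) ^ mi_abs \<theta> * 2 powr (real ((n + 2) * mi_abs \<theta>) + real n * real CARD('n) / 2)
            * haar_coeff \<theta> n \<alpha> f - Dmulti \<theta> f (center n \<alpha>) / real (mi_fact \<theta>)\<bar>
         \<le> L * real CARD('n) / 2 ^ n"
proof -
  let ?g = "\<lambda>t. fwd_diff (haar_step n) (rev (mi_list \<theta>)) f t / haar_step n ^ mi_abs \<theta>"
  obtain a b where Q: "haar_box \<theta> n \<alpha> {} = cbox a b"
    unfolding haar_box_def by blast
  have "?g integrable_on cbox a b"
    by (intro integrable_on_divide integrable_continuous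
        continuous_on_subset[OF continuous_on_fwd_diff[OF cont]]) simp
  moreover have "0 < content (cbox a b)"
    unfolding Q[symmetric] content_haar_box using haar_step_pos[of n] by simp
  moreover note fwd_diff_quotient_near_center[OF \<theta> diff lip \<open>0 \<le> L\<close>, where n = n and \<alpha> = \<alpha>, unfolded Q]
  ultimately have "\<bar>integral (cbox a b) ?g / content (cbox a b) - Dmulti \<theta> f (center n \<alpha>)\<bar>
      \<le> L * real CARD('n) / 2 ^ n"
    by (rule abs_average_minus_le)
  then show ?thesis
    unfolding haar_coeff_scaled_eq_average[OF \<theta> cont] mi_fact_eq_1[OF \<theta>] Q by simp
qed

lemma SUP_abs_tendsto_0_of_geometric_bound:
  fixes g :: "nat \<Rightarrow> 'a \<Rightarrow> real"
  assumes "\<And>n x. \<bar>g n x\<bar> \<le> C / 2 ^ n"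
  shows "(\<lambda>n. SUP x\<in>UNIV. ereal \<bar>g n x\<bar>) \<longlonglongrightarrow> 0"
proof -
  have upper: "\<forall>n. (SUP x\<in>UNIV. ereal \<bar>g n x\<bar>) \<le> ereal (C / 2 ^ n)"
    using assms by (simp add: SUP_least)
  have lower: "\<forall>n. 0 \<le> (SUP x\<in>UNIV. ereal \<bar>g n x\<bar>)"
    by (intro allI SUP_upper2[OF UNIV_I]) simp
  have "(\<lambda>n. C / 2 ^ n) \<longlonglongrightarrow> 0"
    by (rule LIMSEQ_divide_realpow_zero) simp
  then have "(\<lambda>n. ereal (C / 2 ^ n)) \<longlonglongrightarrow> 0"
    by (simp add: zero_ereal_def tendsto_ereal)
  with lower upper show ?thesis
    by (rule tendsto_sandwich[OF always_eventually always_eventually tendsto_const])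
qed

theorem corollary3p3:
  fixes f :: "real^'n::finite \<Rightarrow> real" and \<theta> :: "'n \<Rightarrow> nat"
  assumes "Ck (CARD('n) + 1) f"
    and "\<And>k. 1 \<le> k \<Longrightarrow> k \<le> CARD('n) + 1 \<Longrightarrow> Dk_bounded k f"
    and "\<And>j. \<theta> j \<le> 1"
  shows "(\<lambda>n. SUP \<alpha>\<in>UNIV. ereal \<bar>(-1) ^ mi_abs \<theta>
              * 2 powr (real ((n + 2) * mi_abs \<theta>) + real n * real CARD('n) / 2)
              * haar_coeff \<theta> n \<alpha> f
            - Dmulti \<theta> f (center n \<alpha>) / real (mi_fact \<theta>)\<bar>) \<longlonglongrightarrow> 0"
proof -
  have m: "length (mi_list \<theta>) \<le> CARD('n)"
    using mi_abs_le_card[OF assms(3)] by (simp add: length_mi_list)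
  have cont: "continuous_on UNIV f"
    using assms(1) unfolding Ck_def by (metis le0 list.size(3) pderiv_list.simps(1))
  have diff: "partials_differentiable (mi_abs \<theta>) f"
    using Ck_imp_partials_differentiable[OF assms(1)] m by (simp add: length_mi_list)
  have "Dk_bounded (Suc (length (mi_list \<theta>))) f"
    using assms(2) m by simp
  with m have "\<exists>L\<ge>0. \<forall>x y. \<bar>pderiv_list (mi_list \<theta>) f x - pderiv_list (mi_list \<theta>) f y\<bar> \<le> L * norm (x - y)"
    by (intro Dk_bounded_imp_pderiv_list_lipschitz[OF assms(1)]) simp_all
  then obtain L where "0 \<le> L" and lip: "\<And>x y. \<bar>Dmulti \<theta> f x - Dmulti \<theta> f y\<bar> \<le> L * norm (x - y)"
    unfolding Dmulti_eq_pderiv_list by blast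
  show ?thesis
    by (rule SUP_abs_tendsto_0_of_geometric_bound)
      (rule haar_coeff_error_le[OF assms(3) cont diff lip \<open>0 \<le> L\<close>])
qed

end
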